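(* Let $A$ be an infinite set, $\mathcal{L}\in V(\Omega(A))$, $I,J$ sets, $f:A^{I}\to A^{J}$ a uniformly continuous map, $\alpha:I\to\mathcal{L}$, $\beta:J\to\mathcal{L}$, and suppose $\beta=\overline{f}^{\mathcal{L}}(\alpha)$. Then (1) $\phi_{\beta}=\phi_{\alpha}\circ f^{\star}$; and (2) for every $R\in\{\emptyset\}\cup\bigcup\mathcal{P}(A,J)$, we have $R\in Z_{\beta}$ if and only if $f^{-1}(R)\in Z_{\alpha}$.
   Context: For each $a\in A$ let $\hat{a}$ be a constant symbol, and for each $n\geq1$ and each $h:A^{n}\to A$ let $\hat{h}$ be an $n$-ary operation symbol. $\Omega(A)$ is the algebra with universe $A$ interpreting $\hat{a}$ as $a$ and $\hat{h}$ as $h$; $V(\Omega(A))$ is the variety it generates. For $h:X\to Y$, $\Pi(h)$ is the partition of $X$ into nonempty fibers; for a partition $P$ of $Y$, $[h]_{-1}(P)=\{h^{-1}(R):R\in P\}\setminus\{\emptyset\}$. For $i_{1},\dots,i_{n}\in I$, $\mathcal{P}_{i_{1},\dots,i_{n}}$ is the partition of $A^{I}$ with $u,v$ in the same block iff $u(i_{k})=v(i_{k})$ for all $k$; $\mathcal{P}(A,I)$ is the filter of partitions of $A^{I}$ coarser than some $\mathcal{P}_{i_{1},\dots,i_{n}}$; $\bigcup\mathcal{P}(A,I)$ is the set of all blocks of partitions in it, and $\{\emptyset\}\cup\bigcup\mathcal{P}(A,I)$ is a Boolean algebra of subsets of $A^{I}$. $\mathbf{F}(A,I)=\{h\in A^{A^{I}}:\Pi(h)\in\mathcal{P}(A,I)\}$,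 a subalgebra of $\Omega(A)^{A^{I}}$, freely generated in $V(\Omega(A))$ by the projections $\pi_{i}(u)=u(i)$; each $h\in\mathbf{F}(A,I)$ has the form $\hat{r}^{\mathbf{F}(A,I)}(\pi_{i_{1}},\dots,\pi_{i_{n}})$. A map $h:A^{I}\to A^{J}$ is uniformly continuous if $[h]_{-1}(P)\in\mathcal{P}(A,I)$ for all $P\in\mathcal{P}(A,J)$; then each $\pi_{j}\circ h\in\mathbf{F}(A,I)$. For $h=\hat{r}^{\mathbf{F}(A,I)}(\pi_{i_{1}},\dots,\pi_{i_{n}})$, $\overline{h}^{\mathcal{L}}((\ell_{i})_{i\in I})=\hat{r}^{\mathcal{L}}(\ell_{i_{1}},\dots,\ell_{i_{n}})$ (well defined), and for uniformly continuous $f:A^{I}\to A^{J}$, $\overline{f}^{\mathcal{L}}(\alpha)=(\overline{\pi_{j}\circ f}^{\mathcal{L}}(\alpha))_{j\in J}\in\mathcal{L}^{J}$ for $\alpha\in\mathcal{L}^{I}$. For $\alpha:I\to\mathcal{L}$, $\phi_{\alpha}:\mathbf{F}(A,I)\to\mathcal{L}$ is the unique homomorphism with $\phi_{\alpha}(\pi_{i})=\alpha(i)$, and $Z_{\alpha}$ is the filter on $\{\emptyset\}\cup\bigcup\mathcal{P}(A,I)$ such that for $\ell,m\in\mathbf{F}(A,I)$, $\phi_{\alpha}(\ell)=\phi_{\alpha}(m)$ iff $\{u\in A^{I}:\ell(u)=m(u)\}\in Z_{\alpha}$ (so $\mathbf{F}(A,I)/Z_{\alpha}$ is the quotient by $\ker\phi_{\alpha}$);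 $\phi_{\beta},Z_{\beta}$ are defined analogously for $J$. For uniformly continuous $f:A^{I}\to A^{J}$, $f^{\star}:\mathbf{F}(A,J)\to\mathbf{F}(A,I)$ is $f^{\star}(g)=g\circ f$. *)

theory Defs
  imports "HOL-Library.Disjoint_Sets"
begin

text \<open>An n-ary operation on A is represented as a
function on lists, only ever applied to lists of length n.\<close>

datatype 'a sym = Cst 'a | Op nat "'a list \<Rightarrow> 'a"

fun arity :: "'a sym \<Rightarrow> nat" where
  "arity (Cst a) = 0"
| "arity (Op n h) = n"

fun valid_sym :: "'a sym \<Rightarrow> bool" where
  "valid_sym (Cst a) = True"
| "valid_sym (Op n h) = (n \<ge> 1)"

fun omega :: "'a sym \<Rightarrow> 'a list \<Rightarrow> 'a" where
  "omega (Cst a) xs = a"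
| "omega (Op n h) xs = h xs"

datatype 'a trm = Var nat | Ap "'a sym" "'a trm list"

fun wf_trm :: "'a trm \<Rightarrow> bool" where
  "wf_trm (Var n) = True"
| "wf_trm (Ap s ts) = (valid_sym s \<and> length ts = arity s \<and> (\<forall>t\<in>set ts. wf_trm t))"

fun eval_trm :: "('a sym \<Rightarrow> 'l list \<Rightarrow> 'l) \<Rightarrow> (nat \<Rightarrow> 'l) \<Rightarrow> 'a trm \<Rightarrow> 'l" where
  "eval_trm op \<rho> (Var n) = \<rho> n"
| "eval_trm op \<rho> (Ap s ts) = op s (map (eval_trm op \<rho>) ts)"

definition is_algebra :: "'l set \<Rightarrow> ('a sym \<Rightarrow> 'l list \<Rightarrow> 'l) \<Rightarrow> bool" where
  "is_algebra Lc opL \<longleftrightarrow>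
     (\<forall>s xs. valid_sym s \<and> length xs = arity s \<and> set xs \<subseteq> Lc \<longrightarrow> opL s xs \<in> Lc)"

text \<open>Membership in the variety generated by \<Omega>(A): by Birkhoff's theorem, the
algebras satisfying every identity valid in \<Omega>(A).\<close>
definition in_V_Omega :: "'l set \<Rightarrow> ('a sym \<Rightarrow> 'l list \<Rightarrow> 'l) \<Rightarrow> bool" where
  "in_V_Omega Lc opL \<longleftrightarrow> is_algebra Lc opL \<and>
     (\<forall>s t. wf_trm s \<and> wf_trm t \<and> (\<forall>\<rho>::nat \<Rightarrow> 'a. eval_trm omega \<rho> s = eval_trm omega \<rho> t)
        \<longrightarrow> (\<forall>\<rho>. range \<rho> \<subseteq> Lc \<longrightarrow> eval_trm opL \<rho> s = eval_trm opL \<rho> t))"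

definition Pfin :: "'i set \<Rightarrow> ('i \<Rightarrow> 'a) set set" where
  "Pfin S = {{v. \<forall>i\<in>S. v i = u i} | u. True}"

definition coarser :: "'b set set \<Rightarrow> 'b set set \<Rightarrow> bool" where
  "coarser P Q \<longleftrightarrow> (\<forall>B\<in>Q. \<exists>C\<in>P. B \<subseteq> C)"

definition Pset :: "('i \<Rightarrow> 'a) set set set" where
  "Pset = {P. partition_on UNIV P \<and> (\<exists>S. finite S \<and> coarser P (Pfin S))}"

definition fibers :: "('b \<Rightarrow> 'c) \<Rightarrow> 'b set set" where
  "fibers h = {h -` {y} | y. y \<in> range h}"

definition preimg_part :: "('b \<Rightarrow> 'c) \<Rightarrow> 'c set set \<Rightarrow> 'b set set" where
  "preimg_part h P = (\<lambda>R. h -` R) ` P - {{}}"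

definition Bool_alg :: "('i \<Rightarrow> 'a) set set" where
  "Bool_alg = insert {} (\<Union> Pset)"

definition unif_cont :: "(('i \<Rightarrow> 'a) \<Rightarrow> ('j \<Rightarrow> 'a)) \<Rightarrow> bool" where
  "unif_cont f \<longleftrightarrow> (\<forall>P\<in>(Pset :: ('j \<Rightarrow> 'a) set set set). preimg_part f P \<in> Pset)"

definition Fset :: "(('i \<Rightarrow> 'a) \<Rightarrow> 'a) set" where
  "Fset = {h. fibers h \<in> Pset}"

definition proj :: "'i \<Rightarrow> ('i \<Rightarrow> 'a) \<Rightarrow> 'a" where
  "proj i = (\<lambda>u. u i)"

text \<open>Operations of F(A,I) as a subalgebra of \<Omega>(A)^(A^I).\<close>
definition Fop :: "'a sym \<Rightarrow> (('i \<Rightarrow> 'a) \<Rightarrow> 'a) list \<Rightarrow> ('i \<Rightarrow> 'a) \<Rightarrow> 'a" where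
  "Fop s gs = (\<lambda>u. omega s (map (\<lambda>g. g u) gs))"

definition is_hom_F :: "'l set \<Rightarrow> ('a sym \<Rightarrow> 'l list \<Rightarrow> 'l)
    \<Rightarrow> ((('i \<Rightarrow> 'a) \<Rightarrow> 'a) \<Rightarrow> 'l) \<Rightarrow> bool" where
  "is_hom_F Lc opL \<phi> \<longleftrightarrow> (\<forall>g\<in>Fset. \<phi> g \<in> Lc) \<and>
     (\<forall>s gs. valid_sym s \<and> length gs = arity s \<and> set gs \<subseteq> Fset
        \<longrightarrow> \<phi> (Fop s gs) = opL s (map \<phi> gs))"

text \<open>\<phi>_\<alpha>: the unique homomorphism F(A,I) \<rightarrow> L with \<phi>_\<alpha>(\<pi>_i) = \<alpha>(i)
(made unique as a HOL function by requiring it to be undefined off F(A,I)).\<close>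
definition phi :: "'l set \<Rightarrow> ('a sym \<Rightarrow> 'l list \<Rightarrow> 'l) \<Rightarrow> ('i \<Rightarrow> 'l)
    \<Rightarrow> (('i \<Rightarrow> 'a) \<Rightarrow> 'a) \<Rightarrow> 'l" where
  "phi Lc opL \<alpha> = (THE \<phi>. is_hom_F Lc opL \<phi> \<and> (\<forall>i. \<phi> (proj i) = \<alpha> i)
                        \<and> \<phi> \<in> extensional Fset)"

definition is_filter_on :: "'b set set \<Rightarrow> 'b set set \<Rightarrow> bool" where
  "is_filter_on B Z \<longleftrightarrow> Z \<subseteq> B \<and> UNIV \<in> Z \<and>
     (\<forall>R\<in>Z. \<forall>S\<in>Z. R \<inter> S \<in> Z) \<and> (\<forall>R\<in>Z. \<forall>S\<in>B. R \<subseteq> S \<longrightarrow> S \<in> Z)"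

definition Zf :: "'l set \<Rightarrow> ('a sym \<Rightarrow> 'l list \<Rightarrow> 'l) \<Rightarrow> ('i \<Rightarrow> 'l) \<Rightarrow> ('i \<Rightarrow> 'a) set set" where
  "Zf Lc opL \<alpha> = (THE Z. is_filter_on Bool_alg Z \<and>
      (\<forall>l\<in>Fset. \<forall>m\<in>Fset. phi Lc opL \<alpha> l = phi Lc opL \<alpha> m \<longleftrightarrow> {u. l u = m u} \<in> Z))"

definition hbar :: "('a sym \<Rightarrow> 'l list \<Rightarrow> 'l) \<Rightarrow> (('i \<Rightarrow> 'a) \<Rightarrow> 'a) \<Rightarrow> ('i \<Rightarrow> 'l) \<Rightarrow> 'l" where
  "hbar opL h lv = (SOME v. \<exists>s ix. valid_sym s \<and> length ix = arity s \<and>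
       h = Fop s (map proj ix) \<and> v = opL s (map lv ix))"

definition fbar :: "('a sym \<Rightarrow> 'l list \<Rightarrow> 'l) \<Rightarrow> (('i \<Rightarrow> 'a) \<Rightarrow> ('j \<Rightarrow> 'a)) \<Rightarrow> ('i \<Rightarrow> 'l) \<Rightarrow> 'j \<Rightarrow> 'l" where
  "fbar opL f \<alpha> = (\<lambda>j. hbar opL (\<lambda>u. f u j) \<alpha>)"

definition fstar :: "(('i \<Rightarrow> 'a) \<Rightarrow> ('j \<Rightarrow> 'a)) \<Rightarrow> (('j \<Rightarrow> 'a) \<Rightarrow> 'a) \<Rightarrow> ('i \<Rightarrow> 'a) \<Rightarrow> 'a" where
  "fstar f g = g \<circ> f"

end

theory Submission imports Defs begin

text \<open>Every element of F(A,I) depends on finitely many coordinates and is therefore a term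
operation of \<Omega>(A) applied to projections. Hence a homomorphism F(A,I) \<rightarrow> L is determined by
its values on the projections, and it exists because L satisfies all identities of \<Omega>(A).
Precomposition with a uniformly continuous f maps F(A,J) into F(A,I), so \<phi>_\<alpha> \<circ> f* is a
homomorphism sending \<pi>_j to \<phi>_\<alpha>(\<pi>_j \<circ> f) = \<beta>(j); uniqueness gives \<phi>_\<beta> = \<phi>_\<alpha> \<circ> f*.
For (2), with two distinct points a, b of A, a set R lies in Z_\<beta> iff \<phi>_\<beta> identifies the
indicator of R (values a, b) with the constant a, and precomposing both with f yields the
indicator of f\<inverse>(R) and the constant a.\<close>

section \<open>Terms over an arbitrary set of variables\<close>

datatype ('a, 'i) iterm = IVar 'i | IApp "'a sym" "('a, 'i) iterm list"

fun ieval :: "('a sym \<Rightarrow> 'l list \<Rightarrow> 'l) \<Rightarrow> ('i \<Rightarrow> 'l) \<Rightarrow> ('a, 'i) iterm \<Rightarrow> 'l" where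
  "ieval op \<rho> (IVar i) = \<rho> i"
| "ieval op \<rho> (IApp s ts) = op s (map (ieval op \<rho>) ts)"

fun iwf :: "('a, 'i) iterm \<Rightarrow> bool" where
  "iwf (IVar i) = True"
| "iwf (IApp s ts) = (valid_sym s \<and> length ts = arity s \<and> (\<forall>t\<in>set ts. iwf t))"

fun ivars :: "('a, 'i) iterm \<Rightarrow> 'i set" where
  "ivars (IVar i) = {i}"
| "ivars (IApp s ts) = (\<Union>t\<in>set ts. ivars t)"

fun rename_iterm :: "('i \<Rightarrow> nat) \<Rightarrow> ('a, 'i) iterm \<Rightarrow> 'a trm" where
  "rename_iterm c (IVar i) = Var (c i)"
| "rename_iterm c (IApp s ts) = Ap s (map (rename_iterm c) ts)"

definition term_fun :: "('a, 'i) iterm \<Rightarrow> ('i \<Rightarrow> 'a) \<Rightarrow> 'a" where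
  "term_fun t = (\<lambda>u. ieval omega u t)"

lemma eval_trm_rename_iterm: "eval_trm op \<rho> (rename_iterm c t) = ieval op (\<rho> \<circ> c) t"
  by (induct t) (simp_all cong: map_cong)

lemma wf_trm_rename_iterm: "iwf t \<Longrightarrow> wf_trm (rename_iterm c t)"
  by (induct t) auto

lemma ieval_cong: "(\<And>i. i \<in> ivars t \<Longrightarrow> \<rho> i = \<rho>' i) \<Longrightarrow> ieval op \<rho> t = ieval op \<rho>' t"
  by (induct t) (auto intro!: arg_cong[where f = "op _"] map_cong)

lemma finite_ivars: "finite (ivars t)"
  by (induct t) auto

lemma ieval_closed:
  assumes "is_algebra Lc opL" and "\<forall>i. \<rho> i \<in> Lc" and "iwf t"
  shows "ieval opL \<rho> t \<in> Lc"
  using assms(3)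
proof (induct t)
  case (IApp s ts)
  then have "set (map (ieval opL \<rho>) ts) \<subseteq> Lc" by auto
  with assms(1) IApp.prems show ?case unfolding is_algebra_def by auto
qed (use assms(2) in simp)

text \<open>Identities of \<Omega>(A) are stated with variables in \<open>nat\<close>; an identity over an arbitrary index
type only involves finitely many variables, which are renamed injectively into \<open>nat\<close>.\<close>

lemma in_V_Omega_ieval_eq:
  assumes V: "in_V_Omega Lc opL" and \<alpha>: "\<forall>i. \<alpha> i \<in> Lc" and "iwf s" "iwf t"
    and eq: "term_fun s = term_fun t"
  shows "ieval opL \<alpha> s = ieval opL \<alpha> t"
proof -
  define W where "W = ivars s \<union> ivars t"
  obtain c :: "_ \<Rightarrow> nat" where inj: "inj_on c W"
    using finite_imp_inj_to_nat_seg[of W] finite_ivars by (auto simp: W_def)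
  define e where "e = inv_into W c"
  have ec: "\<And>i. i \<in> W \<Longrightarrow> e (c i) = i" unfolding e_def using inj by simp
  have "\<forall>\<rho>. eval_trm omega \<rho> (rename_iterm c s) = eval_trm omega \<rho> (rename_iterm c t)"
    using eq by (simp add: eval_trm_rename_iterm term_fun_def fun_eq_iff)
  moreover have "range (\<alpha> \<circ> e) \<subseteq> Lc" using \<alpha> by auto
  ultimately have "eval_trm opL (\<alpha> \<circ> e) (rename_iterm c s) = eval_trm opL (\<alpha> \<circ> e) (rename_iterm c t)"
    using V wf_trm_rename_iterm \<open>iwf s\<close> \<open>iwf t\<close> unfolding in_V_Omega_def by blast
  then have "ieval opL (\<alpha> \<circ> e \<circ> c) s = ieval opL (\<alpha> \<circ> e \<circ> c) t"
    by (simp add: eval_trm_rename_iterm comp_assoc)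
  moreover have "ieval opL (\<alpha> \<circ> e \<circ> c) r = ieval opL \<alpha> r" if "ivars r \<subseteq> W" for r
    by (rule ieval_cong) (use ec that in auto)
  ultimately show ?thesis by (simp add: W_def)
qed

section \<open>Finitely supported functions on A^I\<close>

definition depends_only_on :: "'i set \<Rightarrow> (('i \<Rightarrow> 'a) \<Rightarrow> 'b) \<Rightarrow> bool" where
  "depends_only_on S h \<longleftrightarrow> (\<forall>u v. (\<forall>i\<in>S. u i = v i) \<longrightarrow> h u = h v)"

definition finitely_supported :: "(('i \<Rightarrow> 'a) \<Rightarrow> 'b) \<Rightarrow> bool" where
  "finitely_supported h \<longleftrightarrow> (\<exists>S. finite S \<and> depends_only_on S h)"

lemma finitely_supported_const: "finitely_supported (\<lambda>u. c)"
  unfolding finitely_supported_def depends_only_on_def by blast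

lemma finitely_supported_comp: "finitely_supported h \<Longrightarrow> finitely_supported (\<lambda>u. g (h u))"
  unfolding finitely_supported_def depends_only_on_def by metis

lemma finitely_supported_combine:
  assumes "finitely_supported h" and "finitely_supported k"
  shows "finitely_supported (\<lambda>u. F (h u) (k u))"
proof -
  obtain S T where "finite S" "depends_only_on S h" "finite T" "depends_only_on T k"
    using assms unfolding finitely_supported_def by blast
  then have "finite (S \<union> T) \<and> depends_only_on (S \<union> T) (\<lambda>u. F (h u) (k u))"
    unfolding depends_only_on_def by (metis UnCI finite_UnI)
  then show ?thesis unfolding finitely_supported_def by blast
qed

lemma finitely_supported_term_fun: "finitely_supported (term_fun t)"
  unfolding finitely_supported_def depends_only_on_def term_fun_def
  by (blast intro: finite_ivars ieval_cong)

lemma fibers_partition_on: "partition_on UNIV (fibers h)"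
  unfolding partition_on_def disjoint_def fibers_def by auto

lemma coarser_fibers_Pfin_iff:
  fixes h :: "('i \<Rightarrow> 'a) \<Rightarrow> 'b"
  shows "coarser (fibers h) (Pfin S) \<longleftrightarrow> depends_only_on S h"
proof
  assume c: "coarser (fibers h) (Pfin S)"
  show "depends_only_on S h" unfolding depends_only_on_def
  proof (intro allI impI)
    fix u v :: "'i \<Rightarrow> 'a" assume uv: "\<forall>i\<in>S. u i = v i"
    have "{w. \<forall>i\<in>S. w i = u i} \<in> Pfin S" unfolding Pfin_def by auto
    then obtain y where "{w. \<forall>i\<in>S. w i = u i} \<subseteq> h -` {y}"
      using c unfolding coarser_def fibers_def by blast
    then show "h u = h v" using uv by auto
  qed
next
  assume d: "depends_only_on S h"
  show "coarser (fibers h) (Pfin S)" unfolding coarser_def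
  proof
    fix B :: "('i \<Rightarrow> 'a) set" assume "B \<in> Pfin S"
    then obtain u where B: "B = {w. \<forall>i\<in>S. w i = u i}" unfolding Pfin_def by auto
    have "h -` {h u} \<in> fibers h" unfolding fibers_def by auto
    moreover have "B \<subseteq> h -` {h u}" using d unfolding B depends_only_on_def by auto
    ultimately show "\<exists>C\<in>fibers h. B \<subseteq> C" by blast
  qed
qed

lemma fibers_in_Pset_iff: "fibers h \<in> Pset \<longleftrightarrow> finitely_supported h"
  unfolding Pset_def finitely_supported_def using fibers_partition_on coarser_fibers_Pfin_iff by blast

lemma Fset_iff_finitely_supported: "h \<in> Fset \<longleftrightarrow> finitely_supported h"
  unfolding Fset_def mem_Collect_eq by (rule fibers_in_Pset_iff)

lemma Bool_alg_iff_finitely_supported: "R \<in> Bool_alg \<longleftrightarrow> finitely_supported (\<lambda>u. u \<in> R)"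
proof
  assume "R \<in> Bool_alg"
  then consider "R = {}" | P where "R \<in> P" "P \<in> Pset"
    unfolding Bool_alg_def by auto
  then show "finitely_supported (\<lambda>u. u \<in> R)"
  proof cases
    case 1 then show ?thesis using finitely_supported_const by simp
  next
    case 2
    then obtain S where part: "partition_on UNIV P" and "finite S" and c: "coarser P (Pfin S)"
      unfolding Pset_def by blast
    have "v \<in> R" if uv: "\<forall>i\<in>S. u i = v i" and "u \<in> R" for u v
    proof -
      have "{w. \<forall>i\<in>S. w i = u i} \<in> Pfin S" unfolding Pfin_def by auto
      then obtain C where C: "C \<in> P" "{w. \<forall>i\<in>S. w i = u i} \<subseteq> C"
        using c unfolding coarser_def by blast
      then have "u \<in> C" "v \<in> C" using uv by auto
      then have "C = R"
        using part C(1) 2(1) \<open>u \<in> R\<close> unfolding partition_on_def disjoint_def by blast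
      with \<open>v \<in> C\<close> show ?thesis by simp
    qed
    then have "depends_only_on S (\<lambda>u. u \<in> R)"
      unfolding depends_only_on_def by (metis (mono_tags))
    with \<open>finite S\<close> show ?thesis unfolding finitely_supported_def by blast
  qed
next
  assume "finitely_supported (\<lambda>u. u \<in> R)"
  then have "fibers (\<lambda>u. u \<in> R) \<in> Pset" by (simp add: fibers_in_Pset_iff)
  moreover have "R \<noteq> {} \<Longrightarrow> R \<in> fibers (\<lambda>u. u \<in> R)" unfolding fibers_def by auto
  ultimately show "R \<in> Bool_alg" unfolding Bool_alg_def by auto
qed

section \<open>The free algebra F(A,I) and its homomorphisms\<close>

lemma term_fun_in_Fset: "term_fun t \<in> Fset"
  by (simp add: Fset_iff_finitely_supported finitely_supported_term_fun)

lemma proj_eq_term_fun: "proj i = term_fun (IVar i)"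
  unfolding proj_def term_fun_def by simp

lemma proj_in_Fset: "proj i \<in> Fset"
  unfolding proj_eq_term_fun by (rule term_fun_in_Fset)

lemma Fop_term_fun: "Fop s (map term_fun ts) = term_fun (IApp s ts)"
  unfolding Fop_def term_fun_def by (simp add: comp_def)

text \<open>The operation symbol is built from h itself, restricted to a finite support listed by
\<open>ix\<close>; \<open>undefined\<close> is added to the list because symbols of positive arity need n \<ge> 1.\<close>

lemma Fset_eq_Fop_proj:
  assumes "h \<in> Fset"
  obtains s ix where "valid_sym s" "length ix = arity s" "h = Fop s (map proj ix)"
proof -
  obtain S where S: "finite S" "depends_only_on S h"
    using assms by (auto simp: Fset_iff_finitely_supported finitely_supported_def)
  obtain ix where ix: "set ix = insert undefined S" using finite_list S(1) by blast
  define H where "H = (\<lambda>xs. h (\<lambda>i. case map_of (zip ix xs) i of Some a \<Rightarrow> a | None \<Rightarrow> undefined))"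
  have "h = Fop (Op (length ix) H) (map proj ix)"
  proof
    fix u
    have "Fop (Op (length ix) H) (map proj ix) u = H (map u ix)"
      by (simp add: Fop_def comp_def proj_def)
    also have "\<dots> = h (\<lambda>i. if i \<in> set ix then u i else undefined)"
      unfolding H_def map_of_zip_map by (intro arg_cong[where f = h] ext) simp
    also have "\<dots> = h u"
      by (rule S(2)[unfolded depends_only_on_def, rule_format]) (simp add: ix)
    finally show "h u = Fop (Op (length ix) H) (map proj ix) u" by simp
  qed
  moreover have "length ix \<ge> 1" using ix by (cases ix) auto
  ultimately show ?thesis by (intro that[of "Op (length ix) H" ix]) simp_all
qed

lemma Fset_eq_term_fun:
  assumes "h \<in> Fset"
  obtains t where "iwf t" "h = term_fun t"
proof -
  obtain s ix where s: "valid_sym s" "length ix = arity s" and h: "h = Fop s (map proj ix)"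
    using Fset_eq_Fop_proj[OF assms] .
  have projs: "map proj ix = map term_fun (map IVar ix)"
    by (simp add: proj_eq_term_fun)
  have "h = term_fun (IApp s (map IVar ix))"
    unfolding h projs by (rule Fop_term_fun)
  with s show ?thesis by (intro that) simp_all
qed

lemma is_hom_F_Fop:
  assumes "is_hom_F Lc opL \<phi>" "valid_sym s" "length gs = arity s" "set gs \<subseteq> Fset"
  shows "\<phi> (Fop s gs) = opL s (map \<phi> gs)"
  using assms unfolding is_hom_F_def by blast

lemma is_hom_F_term_fun:
  assumes hom: "is_hom_F Lc opL \<phi>" and proj: "\<forall>i. \<phi> (proj i) = \<alpha> i" and "iwf t"
  shows "\<phi> (term_fun t) = ieval opL \<alpha> t"
  using \<open>iwf t\<close>
proof (induct t)
  case (IVar i) then show ?case using proj by (simp add: proj_eq_term_fun)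
next
  case (IApp s ts)
  have "\<phi> (term_fun (IApp s ts)) = opL s (map \<phi> (map term_fun ts))"
    unfolding Fop_term_fun[symmetric]
    by (rule is_hom_F_Fop[OF hom]) (use IApp.prems term_fun_in_Fset in auto)
  also have "map \<phi> (map term_fun ts) = map (ieval opL \<alpha>) ts"
    using IApp by auto
  finally show ?case by simp
qed

lemma is_hom_F_unique:
  assumes "is_hom_F Lc opL \<phi>" "\<forall>i. \<phi> (proj i) = \<alpha> i"
    and "is_hom_F Lc opL \<psi>" "\<forall>i. \<psi> (proj i) = \<alpha> i" and "g \<in> Fset"
  shows "\<phi> g = \<psi> g"
proof -
  obtain t where "iwf t" and g: "g = term_fun t" using Fset_eq_term_fun[OF assms(5)] .
  show ?thesis
    unfolding g is_hom_F_term_fun[OF assms(1,2) \<open>iwf t\<close>] is_hom_F_term_fun[OF assms(3,4) \<open>iwf t\<close>] ..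
qed

text \<open>The homomorphism evaluates a chosen term for g in L; by \<open>in_V_Omega_ieval_eq\<close> the choice
does not matter.\<close>

lemma is_hom_F_exists:
  assumes V: "in_V_Omega Lc opL" and \<alpha>: "\<forall>i. \<alpha> i \<in> Lc"
  obtains \<phi> :: "(('i \<Rightarrow> 'a) \<Rightarrow> 'a) \<Rightarrow> 'l"
  where "is_hom_F Lc opL \<phi>" "\<forall>i. \<phi> (proj i) = \<alpha> i" "\<phi> \<in> extensional Fset"
proof -
  define T where "T g = (SOME t. iwf t \<and> g = term_fun t)" for g :: "('i \<Rightarrow> 'a) \<Rightarrow> 'a"
  define \<phi> where "\<phi> g = (if g \<in> Fset then ieval opL \<alpha> (T g) else undefined)" for g
  have T: "iwf (T g)" "g = term_fun (T g)" if "g \<in> Fset" for g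
    using someI_ex[of "\<lambda>t. iwf t \<and> g = term_fun t"] Fset_eq_term_fun[OF that]
    unfolding T_def by blast+
  have \<phi>_term_fun: "\<phi> (term_fun t) = ieval opL \<alpha> t" if "iwf t" for t
  proof -
    have "term_fun t \<in> Fset" by (rule term_fun_in_Fset)
    then have "ieval opL \<alpha> (T (term_fun t)) = ieval opL \<alpha> t"
      using in_V_Omega_ieval_eq[OF V \<alpha> T(1) that] T(2) by simp
    with \<open>term_fun t \<in> Fset\<close> show ?thesis unfolding \<phi>_def by simp
  qed
  have alg: "is_algebra Lc opL" using V unfolding in_V_Omega_def by blast
  have "is_hom_F Lc opL \<phi>" unfolding is_hom_F_def
  proof (intro conjI ballI allI impI)
    fix g :: "('i \<Rightarrow> 'a) \<Rightarrow> 'a" assume "g \<in> Fset"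
    then show "\<phi> g \<in> Lc" unfolding \<phi>_def using ieval_closed[OF alg \<alpha>] T(1) by simp
  next
    fix s :: "'a sym" and gs :: "(('i \<Rightarrow> 'a) \<Rightarrow> 'a) list"
    assume s: "valid_sym s \<and> length gs = arity s \<and> set gs \<subseteq> Fset"
    then have gs: "gs = map term_fun (map T gs)"
      by (simp add: map_idI T(2)[symmetric] subset_iff)
    have "\<phi> (Fop s gs) = \<phi> (term_fun (IApp s (map T gs)))"
      by (subst gs) (simp only: Fop_term_fun)
    also have "\<dots> = opL s (map (ieval opL \<alpha>) (map T gs))"
      using s T(1) by (subst \<phi>_term_fun) auto
    also have "map (ieval opL \<alpha>) (map T gs) = map \<phi> gs"
      using s unfolding \<phi>_def by (auto intro!: map_cong)
    finally show "\<phi> (Fop s gs) = opL s (map \<phi> gs)" .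
  qed
  moreover have "\<forall>i. \<phi> (proj i) = \<alpha> i"
    using \<phi>_term_fun[of "IVar _"] by (simp add: proj_eq_term_fun)
  moreover have "\<phi> \<in> extensional Fset" unfolding \<phi>_def extensional_def by auto
  ultimately show ?thesis using that by blast
qed

lemma phi_characterization:
  assumes "in_V_Omega Lc opL" and "\<forall>i. \<alpha> i \<in> Lc"
  shows "is_hom_F Lc opL (phi Lc opL \<alpha> :: (('i \<Rightarrow> 'a) \<Rightarrow> 'a) \<Rightarrow> 'l)"
    and "\<forall>i. phi Lc opL \<alpha> (proj i) = \<alpha> i"
proof -
  let ?P = "\<lambda>\<phi> :: (('i \<Rightarrow> 'a) \<Rightarrow> 'a) \<Rightarrow> 'l.
    is_hom_F Lc opL \<phi> \<and> (\<forall>i. \<phi> (proj i) = \<alpha> i) \<and> \<phi> \<in> extensional Fset"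
  have "\<exists>!\<phi>. ?P \<phi>"
  proof (rule ex_ex1I)
    obtain \<phi> where "?P \<phi>" using is_hom_F_exists[OF assms] by blast
    then show "\<exists>\<phi>. ?P \<phi>" by blast
  next
    fix \<phi> \<psi> assume "?P \<phi>" "?P \<psi>"
    then show "\<phi> = \<psi>" using is_hom_F_unique[of Lc opL \<phi> \<alpha> \<psi>]
      by (intro extensionalityI[of _ Fset]) auto
  qed
  then have "?P (phi Lc opL \<alpha>)" unfolding phi_def by (rule theI')
  then show "is_hom_F Lc opL (phi Lc opL \<alpha> :: (('i \<Rightarrow> 'a) \<Rightarrow> 'a) \<Rightarrow> 'l)"
    and "\<forall>i. phi Lc opL \<alpha> (proj i) = \<alpha> i" by blast+
qed

section \<open>The filter Z_\<alpha>\<close>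

lemma is_hom_F_Fop_cong:
  assumes "is_hom_F Lc opL \<phi>" "valid_sym s" "length gs = arity s" "length gs' = arity s"
    and "set gs \<subseteq> Fset" "set gs' \<subseteq> Fset" "map \<phi> gs = map \<phi> gs'"
  shows "\<phi> (Fop s gs) = \<phi> (Fop s gs')"
  using is_hom_F_Fop[OF assms(1-3,5)] is_hom_F_Fop[OF assms(1,2,4,6)] assms(7) by simp

definition indicator_into :: "'a \<Rightarrow> 'a \<Rightarrow> 'b set \<Rightarrow> 'b \<Rightarrow> 'a" where
  "indicator_into a b R u = (if u \<in> R then a else b)"

lemma indicator_into_in_Fset: "R \<in> Bool_alg \<Longrightarrow> indicator_into a b R \<in> Fset"
  unfolding Fset_iff_finitely_supported Bool_alg_iff_finitely_supported indicator_into_def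
  by (rule finitely_supported_comp)

lemma equalizer_in_Bool_alg: "l \<in> Fset \<Longrightarrow> m \<in> Fset \<Longrightarrow> {u. l u = m u} \<in> Bool_alg"
  unfolding Fset_iff_finitely_supported Bool_alg_iff_finitely_supported mem_Collect_eq
  by (rule finitely_supported_combine)

lemma Int_in_Bool_alg: "R \<in> Bool_alg \<Longrightarrow> S \<in> Bool_alg \<Longrightarrow> R \<inter> S \<in> Bool_alg"
  unfolding Bool_alg_iff_finitely_supported Int_iff by (rule finitely_supported_combine)

lemma UNIV_in_Bool_alg: "UNIV \<in> Bool_alg"
  unfolding Bool_alg_iff_finitely_supported by (simp add: finitely_supported_const)

definition hom_filter :: "((('i \<Rightarrow> 'a) \<Rightarrow> 'a) \<Rightarrow> 'l) \<Rightarrow> 'a \<Rightarrow> 'a \<Rightarrow> ('i \<Rightarrow> 'a) set set" where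
  "hom_filter \<phi> a b = {R \<in> Bool_alg. \<phi> (indicator_into a b R) = \<phi> (\<lambda>u. a)}"

text \<open>Each filter axiom, and each direction of the kernel correspondence, is an equation between
values of a homomorphism at Fop-terms built from a suitable operation symbol of \<Omega>(A): pointwise
conjunction and disjunction of indicators, the equality test, and selection by an indicator.\<close>

lemma is_filter_on_hom_filter:
  assumes hom: "is_hom_F Lc opL \<phi>" and ab: "a \<noteq> b"
  shows "is_filter_on Bool_alg (hom_filter \<phi> a b)"
proof -
  let ?\<chi> = "indicator_into a b" and ?c = "\<lambda>u. a"
  have cF: "?c \<in> Fset" by (simp add: Fset_iff_finitely_supported finitely_supported_const)
  show ?thesis unfolding is_filter_on_def
  proof (intro conjI ballI impI)
    show "hom_filter \<phi> a b \<subseteq> Bool_alg" unfolding hom_filter_def by blast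
    show "UNIV \<in> hom_filter \<phi> a b"
      unfolding hom_filter_def indicator_into_def by (simp add: UNIV_in_Bool_alg)
  next
    fix R S assume "R \<in> hom_filter \<phi> a b" "S \<in> hom_filter \<phi> a b"
    then have RB: "R \<in> Bool_alg" "\<phi> (?\<chi> R) = \<phi> ?c" and SB: "S \<in> Bool_alg" "\<phi> (?\<chi> S) = \<phi> ?c"
      unfolding hom_filter_def by auto
    define op_and where "op_and = Op 2 (\<lambda>xs. if xs ! 0 = a \<and> xs ! 1 = a then a else b)"
    have "\<phi> (?\<chi> (R \<inter> S)) = \<phi> (Fop op_and [?\<chi> R, ?\<chi> S])"
      unfolding indicator_into_def op_and_def Fop_def by (auto simp: ab intro!: arg_cong[where f = \<phi>])
    also have "\<dots> = \<phi> (Fop op_and [?c, ?c])"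
      by (rule is_hom_F_Fop_cong[OF hom])
        (use RB SB cF indicator_into_in_Fset in \<open>auto simp: op_and_def\<close>)
    also have "Fop op_and [?c, ?c] = ?c" unfolding op_and_def Fop_def by simp
    finally show "R \<inter> S \<in> hom_filter \<phi> a b"
      unfolding hom_filter_def using Int_in_Bool_alg RB SB by auto
  next
    fix R S assume "R \<in> hom_filter \<phi> a b" and SB: "S \<in> Bool_alg" and "R \<subseteq> S"
    then have RB: "R \<in> Bool_alg" "\<phi> (?\<chi> R) = \<phi> ?c" unfolding hom_filter_def by auto
    define op_or where "op_or = Op 2 (\<lambda>xs. if xs ! 0 = a then a else xs ! 1)"
    have "\<phi> (?\<chi> S) = \<phi> (Fop op_or [?\<chi> R, ?\<chi> S])"
      unfolding indicator_into_def op_or_def Fop_def using \<open>R \<subseteq> S\<close>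
      by (intro arg_cong[where f = \<phi>]) (auto simp: fun_eq_iff)
    also have "\<dots> = \<phi> (Fop op_or [?c, ?\<chi> S])"
      by (rule is_hom_F_Fop_cong[OF hom])
        (use RB SB cF indicator_into_in_Fset in \<open>auto simp: op_or_def\<close>)
    also have "Fop op_or [?c, ?\<chi> S] = ?c" unfolding op_or_def Fop_def by simp
    finally show "S \<in> hom_filter \<phi> a b" unfolding hom_filter_def using SB by auto
  qed
qed

lemma is_hom_F_eq_iff_hom_filter:
  assumes hom: "is_hom_F Lc opL \<phi>" and ab: "a \<noteq> b" and l: "l \<in> Fset" and m: "m \<in> Fset"
  shows "\<phi> l = \<phi> m \<longleftrightarrow> {u. l u = m u} \<in> hom_filter \<phi> a b"
proof -
  define E where "E = {u. l u = m u}"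
  let ?\<chi> = "indicator_into a b E" and ?c = "\<lambda>u. a"
  define op_eq where "op_eq = Op 2 (\<lambda>xs. if xs ! 0 = xs ! 1 then a else b)"
  define op_sel where "op_sel = Op 3 (\<lambda>xs. if xs ! 2 = a then xs ! 0 else xs ! 1)"
  have EB: "E \<in> Bool_alg" unfolding E_def using equalizer_in_Bool_alg l m .
  have cF: "?c \<in> Fset" by (simp add: Fset_iff_finitely_supported finitely_supported_const)
  show ?thesis
  proof
    assume eq: "\<phi> l = \<phi> m"
    have "?\<chi> = Fop op_eq [l, m]" "Fop op_eq [l, l] = ?c"
      unfolding indicator_into_def op_eq_def Fop_def E_def by auto
    moreover have "\<phi> (Fop op_eq [l, m]) = \<phi> (Fop op_eq [l, l])"
      by (rule is_hom_F_Fop_cong[OF hom]) (use l m eq in \<open>auto simp: op_eq_def\<close>)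
    ultimately show "{u. l u = m u} \<in> hom_filter \<phi> a b"
      unfolding hom_filter_def using EB E_def by auto
  next
    assume "{u. l u = m u} \<in> hom_filter \<phi> a b"
    then have eq: "\<phi> ?\<chi> = \<phi> ?c" unfolding hom_filter_def E_def by blast
    have "Fop op_sel [l, m, ?\<chi>] = m" "Fop op_sel [l, m, ?c] = l"
      unfolding indicator_into_def op_sel_def Fop_def E_def using ab by (auto simp: fun_eq_iff)
    moreover have "\<phi> (Fop op_sel [l, m, ?\<chi>]) = \<phi> (Fop op_sel [l, m, ?c])"
      by (rule is_hom_F_Fop_cong[OF hom])
        (use l m eq EB cF indicator_into_in_Fset in \<open>auto simp: op_sel_def numeral_eq_Suc\<close>)
    ultimately show "\<phi> l = \<phi> m" by simp
  qed
qed

text \<open>Z_\<alpha> is only well defined when A has two distinct points a, b: any filter Z with the defining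
property contains exactly the R whose indicator \<phi>_\<alpha> identifies with the constant a.\<close>

lemma Zf_characterization:
  fixes \<alpha> :: "'i \<Rightarrow> 'l" and opL :: "'a sym \<Rightarrow> 'l list \<Rightarrow> 'l"
  assumes V: "in_V_Omega Lc opL" and \<alpha>: "\<forall>i. \<alpha> i \<in> Lc" and ab: "(a :: 'a) \<noteq> b"
    and l: "l \<in> Fset" and m: "m \<in> Fset"
  shows "phi Lc opL \<alpha> l = phi Lc opL \<alpha> m \<longleftrightarrow> {u. l u = m u} \<in> Zf Lc opL \<alpha>"
proof -
  define \<phi> where "\<phi> = (phi Lc opL \<alpha> :: (('i \<Rightarrow> 'a) \<Rightarrow> 'a) \<Rightarrow> 'l)"
  have hom: "is_hom_F Lc opL \<phi>" unfolding \<phi>_def using phi_characterization(1)[OF V \<alpha>] .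
  have cF: "(\<lambda>u. a) \<in> Fset"
    by (simp add: Fset_iff_finitely_supported finitely_supported_const)
  let ?Q = "\<lambda>Z. is_filter_on Bool_alg Z \<and>
    (\<forall>l\<in>Fset. \<forall>m\<in>Fset. \<phi> l = \<phi> m \<longleftrightarrow> {u. l u = m u} \<in> Z)"
  have "Z = hom_filter \<phi> a b" if Z: "?Q Z" for Z
  proof (rule set_eqI)
    fix R :: "('i \<Rightarrow> 'a) set"
    have sub: "Z \<subseteq> Bool_alg" using Z[THEN conjunct1] unfolding is_filter_on_def by (rule conjunct1)
    have R: "{u. indicator_into a b R u = a} = R" unfolding indicator_into_def using ab by auto
    have "R \<in> Z \<longleftrightarrow> \<phi> (indicator_into a b R) = \<phi> (\<lambda>u. a)" if "R \<in> Bool_alg"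
      using Z[THEN conjunct2, rule_format, OF indicator_into_in_Fset[OF that] cF] by (simp only: R)
    with sub show "R \<in> Z \<longleftrightarrow> R \<in> hom_filter \<phi> a b" unfolding hom_filter_def by blast
  qed
  moreover have "?Q (hom_filter \<phi> a b)"
    using is_filter_on_hom_filter[OF hom ab] is_hom_F_eq_iff_hom_filter[OF hom ab] by simp
  ultimately have Z: "Zf Lc opL \<alpha> = hom_filter \<phi> a b"
    unfolding Zf_def \<phi>_def[symmetric] by (rule the_equality[rotated])
  show ?thesis
    unfolding Z \<phi>_def[symmetric] by (rule is_hom_F_eq_iff_hom_filter[OF hom ab l m])
qed

section \<open>Uniformly continuous maps\<close>

lemma Fop_comp: "Fop s gs \<circ> f = Fop s (map (\<lambda>g. g \<circ> f) gs)"
  unfolding Fop_def by (simp add: comp_def)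

lemma preimg_part_fibers: "preimg_part f (fibers g) = fibers (g \<circ> f)"
proof
  show "preimg_part f (fibers g) \<subseteq> fibers (g \<circ> f)"
  proof
    fix X assume "X \<in> preimg_part f (fibers g)"
    then obtain y where X: "X = f -` g -` {y}" "X \<noteq> {}"
      unfolding preimg_part_def fibers_def by auto
    then obtain x where "x \<in> X" by blast
    with X have "y = (g \<circ> f) x" by auto
    with X show "X \<in> fibers (g \<circ> f)" unfolding fibers_def by (auto simp: vimage_comp)
  qed
next
  show "fibers (g \<circ> f) \<subseteq> preimg_part f (fibers g)"
  proof
    fix X assume "X \<in> fibers (g \<circ> f)"
    then obtain x where "X = (g \<circ> f) -` {g (f x)}" unfolding fibers_def by auto
    then have X: "X = f -` g -` {g (f x)}" by auto
    moreover have "g -` {g (f x)} \<in> fibers g" unfolding fibers_def by auto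
    moreover have "X \<noteq> {}" using X by auto
    ultimately show "X \<in> preimg_part f (fibers g)" unfolding preimg_part_def by blast
  qed
qed

lemma unif_cont_comp_in_Fset:
  assumes "unif_cont f" and "g \<in> Fset"
  shows "g \<circ> f \<in> Fset"
  using assms preimg_part_fibers[of f g] unfolding Fset_def unif_cont_def by auto

lemma is_hom_F_comp:
  fixes f :: "('i \<Rightarrow> 'a) \<Rightarrow> ('j \<Rightarrow> 'a)" and \<phi> :: "(('i \<Rightarrow> 'a) \<Rightarrow> 'a) \<Rightarrow> 'l"
  assumes hom: "is_hom_F Lc opL \<phi>" and f: "unif_cont f"
  shows "is_hom_F Lc opL (\<lambda>g. \<phi> (g \<circ> f))"
  unfolding is_hom_F_def
proof (intro conjI ballI allI impI)
  fix g :: "('j \<Rightarrow> 'a) \<Rightarrow> 'a" assume "g \<in> Fset"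
  then show "\<phi> (g \<circ> f) \<in> Lc"
    using hom unif_cont_comp_in_Fset[OF f] unfolding is_hom_F_def by blast
next
  fix s :: "'a sym" and gs :: "(('j \<Rightarrow> 'a) \<Rightarrow> 'a) list"
  assume s: "valid_sym s \<and> length gs = arity s \<and> set gs \<subseteq> Fset"
  then have "set (map (\<lambda>g. g \<circ> f) gs) \<subseteq> Fset" using unif_cont_comp_in_Fset[OF f] by auto
  then show "\<phi> (Fop s gs \<circ> f) = opL s (map (\<lambda>g. \<phi> (g \<circ> f)) gs)"
    unfolding Fop_comp using is_hom_F_Fop[OF hom] s by (simp add: comp_def)
qed

text \<open>This is the well-definedness of the extension hbar: whichever representation
h = r(\<pi>_i1, ..., \<pi>_in) the choice operator picks, r evaluated at \<alpha> is \<phi>_\<alpha>(h).\<close>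

lemma phi_eq_hbar:
  assumes V: "in_V_Omega Lc opL" and \<alpha>: "\<forall>i. \<alpha> i \<in> Lc" and h: "h \<in> Fset"
  shows "phi Lc opL \<alpha> h = hbar opL h \<alpha>"
proof -
  let ?P = "\<lambda>v. \<exists>s ix. valid_sym s \<and> length ix = arity s \<and> h = Fop s (map proj ix)
    \<and> v = opL s (map \<alpha> ix)"
  obtain s ix where "valid_sym s" "length ix = arity s" "h = Fop s (map proj ix)"
    using Fset_eq_Fop_proj[OF h] .
  then have "\<exists>v. ?P v" by blast
  then obtain s ix where s: "valid_sym s" "length ix = arity s"
    and h_eq: "h = Fop s (map proj ix)" and hbar: "hbar opL h \<alpha> = opL s (map \<alpha> ix)"
    unfolding hbar_def by (rule someI_ex[THEN exE]) blast
  have "phi Lc opL \<alpha> h = opL s (map (phi Lc opL \<alpha>) (map proj ix))"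
    unfolding h_eq by (rule is_hom_F_Fop[OF phi_characterization(1)[OF V \<alpha>]])
      (use s proj_in_Fset in auto)
  also have "\<dots> = opL s (map \<alpha> ix)" using phi_characterization(2)[OF V \<alpha>] by (simp add: comp_def)
  finally show ?thesis unfolding hbar .
qed

lemma phi_fbar_eq_phi_comp:
  fixes f :: "('i \<Rightarrow> 'a) \<Rightarrow> ('j \<Rightarrow> 'a)" and g :: "('j \<Rightarrow> 'a) \<Rightarrow> 'a"
  assumes V: "in_V_Omega Lc opL" and f: "unif_cont f" and \<alpha>: "\<forall>i. \<alpha> i \<in> Lc"
    and \<beta>: "\<forall>j. fbar opL f \<alpha> j \<in> Lc" and g: "g \<in> Fset"
  shows "phi Lc opL (fbar opL f \<alpha>) g = phi Lc opL \<alpha> (g \<circ> f)"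
proof (rule is_hom_F_unique[OF phi_characterization[OF V \<beta>] _ _ g])
  show "is_hom_F Lc opL (\<lambda>g. phi Lc opL \<alpha> (g \<circ> f))"
    by (rule is_hom_F_comp[OF phi_characterization(1)[OF V \<alpha>] f])
  show "\<forall>j. phi Lc opL \<alpha> (proj j \<circ> f) = fbar opL f \<alpha> j"
  proof
    fix j
    have "proj j \<circ> f = (\<lambda>u. f u j)" unfolding proj_def by auto
    moreover have "proj j \<circ> f \<in> Fset" by (rule unif_cont_comp_in_Fset[OF f proj_in_Fset])
    ultimately show "phi Lc opL \<alpha> (proj j \<circ> f) = fbar opL f \<alpha> j"
      unfolding fbar_def using phi_eq_hbar[OF V \<alpha>] by simp
  qed
qed

theorem mainTheorem7:
  fixes Lc :: "'l set" and opL :: "'a sym \<Rightarrow> 'l list \<Rightarrow> 'l"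
    and f :: "('i \<Rightarrow> 'a) \<Rightarrow> ('j \<Rightarrow> 'a)"
    and \<alpha> :: "'i \<Rightarrow> 'l" and \<beta> :: "'j \<Rightarrow> 'l"
  assumes "infinite (UNIV :: 'a set)"
    and "in_V_Omega Lc opL"
    and "unif_cont f"
    and "\<forall>i. \<alpha> i \<in> Lc"
    and "\<forall>j. \<beta> j \<in> Lc"
    and "\<beta> = fbar opL f \<alpha>"
  shows "(\<forall>g\<in>(Fset :: (('j \<Rightarrow> 'a) \<Rightarrow> 'a) set). phi Lc opL \<beta> g = phi Lc opL \<alpha> (fstar f g))
       \<and> (\<forall>R\<in>(Bool_alg :: ('j \<Rightarrow> 'a) set set). R \<in> Zf Lc opL \<beta> \<longleftrightarrow> f -` R \<in> Zf Lc opL \<alpha>)"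
proof -
  note V = assms(2) and f = assms(3) and \<alpha> = assms(4) and \<beta> = assms(5)
  have phi_comp: "phi Lc opL \<beta> g = phi Lc opL \<alpha> (g \<circ> f)" if "g \<in> Fset" for g
    using phi_fbar_eq_phi_comp[OF V f \<alpha> _ that] \<beta> unfolding assms(6) by blast
  obtain a b :: 'a where ab: "a \<noteq> b"
    using ex_new_if_finite[OF assms(1), of "{_}"] by blast
  have "R \<in> Zf Lc opL \<beta> \<longleftrightarrow> f -` R \<in> Zf Lc opL \<alpha>" if R: "R \<in> Bool_alg" for R
  proof -
    let ?\<chi> = "indicator_into a b R" and ?c = "\<lambda>u :: 'j \<Rightarrow> 'a. a"
    have F: "?\<chi> \<in> Fset" "?c \<in> Fset"
      using indicator_into_in_Fset[OF R] finitely_supported_const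
      by (auto simp: Fset_iff_finitely_supported)
    have "{u. ?\<chi> u = ?c u} = R" "{u. (?\<chi> \<circ> f) u = (?c \<circ> f) u} = f -` R"
      unfolding indicator_into_def using ab by auto
    then show ?thesis
      using Zf_characterization[OF V \<beta> ab F] phi_comp[OF F(1)] phi_comp[OF F(2)]
        Zf_characterization[OF V \<alpha> ab unif_cont_comp_in_Fset[OF f F(1)] unif_cont_comp_in_Fset[OF f F(2)]]
      by simp
  qed
  with phi_comp show ?thesis unfolding fstar_def by blast
qed

end
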